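(* Let $(A,p)$ be a financial market with a riskless asset with $p_1=1$, and let $(\Theta,D)$ be the corresponding matrix scheme. Then $(A,p)$ contains no arbitrage portfolio if and only if for every subset $D'\subseteq D$ with $|D'|\ge 2$ the matrix scheme $(\Theta,D')$ contains uncertainty.
   Context: Vector order: for $x,y\in\mathbb{R}^k$, $x\le y$ means $x_i\le y_i$ for all $i$, and $x<y$ means $x\le y$ and $x\neq y$. A financial market with a riskless asset is a pair $(A,p)$ with $A\in\mathbb{R}^{n\times m}$, $p\in\mathbb{R}^n$, such that $A_{1j}=1$ for all $j\in\{1,\dots,m\}$ (here we additionally assume $p_1=1$). A portfolio $x\in\mathbb{R}^n$ is an arbitrage portfolio on $(A,p)$ if either ($p^Tx\le 0$ and $A^Tx>0$) or ($p^Tx<0$ and $A^Tx\ge 0$). The corresponding matrix scheme is $(\Theta,D)$ with $\Theta=\{1,\dots,m\}$, $B=A-[p\ p\ \cdots\ p]$ (i.e. $B_{i\theta}=A_{i\theta}-p_i$), and $D=\{B^Tx: x\in\mathbb{R}^n\}\subseteq\mathbb{R}^m$, each vector viewed as a real function on $\Theta$. A matrix scheme is a pair $(\Theta,D')$ with $D'$ a set of real functions on $\Theta$. A preference relation on a set $X$ is an asymmetric ($x\prec y\Rightarrow$ not $y\prec x$) and negatively transitive (not $x\prec y$ and not $y\prec z\Rightarrow$ not $x\prec z$) binary relation. Domination on $D'$: $d_1\prec d_2$ iff $d_1(\theta)\le d_2(\theta)$ for all $\theta$ and $d_1(\theta^* )<d_2(\theta^* )$ for some $\theta^*$. A projection of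 preference of consequences in $(\Theta,D')$ is a preference relation $\prec^P$ on $D'$ with $d_1\prec d_2\Rightarrow d_1\prec^P d_2$ for all $d_1,d_2\in D'$. The scheme $(\Theta,D')$ contains uncertainty if this projection is not unique. *)

theory Defs
  imports "HOL-Analysis.Analysis"
begin

definition vle :: "real^'k \<Rightarrow> real^'k \<Rightarrow> bool" where
  "vle x y \<longleftrightarrow> (\<forall>i. x $ i \<le> y $ i)"

definition vlt :: "real^'k \<Rightarrow> real^'k \<Rightarrow> bool" where
  "vlt x y \<longleftrightarrow> vle x y \<and> x \<noteq> y"

text \<open>Market (A,p): A is an n x m matrix (rows = assets 'n, columns = states 'm),
  p the price vector. Arbitrage portfolio x.\<close>
definition arbitrage_portfolio :: "real^'m^'n \<Rightarrow> real^'n \<Rightarrow> real^'n \<Rightarrow> bool" where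
  "arbitrage_portfolio A p x \<longleftrightarrow>
     (p \<bullet> x \<le> 0 \<and> vlt 0 (transpose A *v x)) \<or> (p \<bullet> x < 0 \<and> vle 0 (transpose A *v x))"

definition scheme_B :: "real^'m^'n \<Rightarrow> real^'n \<Rightarrow> real^'m^'n" where
  "scheme_B A p = (\<chi> i j. A $ i $ j - p $ i)"

definition scheme_D :: "real^'m^'n \<Rightarrow> real^'n \<Rightarrow> (real^'m) set" where
  "scheme_D A p = {transpose (scheme_B A p) *v x | x. True}"

definition dominated :: "real^'m \<Rightarrow> real^'m \<Rightarrow> bool" where
  "dominated d1 d2 \<longleftrightarrow> (\<forall>\<theta>. d1 $ \<theta> \<le> d2 $ \<theta>) \<and> (\<exists>\<theta>. d1 $ \<theta> < d2 $ \<theta>)"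

definition preference_on :: "'a set \<Rightarrow> ('a \<times> 'a) set \<Rightarrow> bool" where
  "preference_on X R \<longleftrightarrow> R \<subseteq> X \<times> X \<and>
     (\<forall>x\<in>X. \<forall>y\<in>X. (x, y) \<in> R \<longrightarrow> (y, x) \<notin> R) \<and>
     (\<forall>x\<in>X. \<forall>y\<in>X. \<forall>z\<in>X. (x, y) \<notin> R \<and> (y, z) \<notin> R \<longrightarrow> (x, z) \<notin> R)"

definition projection_of_preference :: "(real^'m) set \<Rightarrow> ((real^'m) \<times> (real^'m)) set \<Rightarrow> bool" where
  "projection_of_preference D' R \<longleftrightarrow> preference_on D' R \<and>
     (\<forall>d1\<in>D'. \<forall>d2\<in>D'. dominated d1 d2 \<longrightarrow> (d1, d2) \<in> R)"

definition contains_uncertainty :: "(real^'m) set \<Rightarrow> bool" where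
  "contains_uncertainty D' \<longleftrightarrow>
     (\<exists>R1 R2. projection_of_preference D' R1 \<and> projection_of_preference D' R2 \<and> R1 \<noteq> R2)"

end

theory Submission
  imports Defs
begin

text \<open>Subtracting the price from every payoff turns a portfolio x into its net gain
  transpose B *v x. Adding riskless units (payoff 1 in every state, price 1) shifts the price
  without changing the net gain, so every element of D is the payoff of a portfolio of price zero;
  hence an arbitrage exists iff some d in D dominates 0. As D is a subspace and domination is
  translation invariant, this happens iff two elements of D are comparable. If no two elements
  of D' are comparable, the empty relation and the relation "a is below everything else" are two
  projections of preference; if d dominates 0, then (0, d) is forced into and (d, 0) out of every
  projection on {0, d}, which therefore has only one.\<close>

declare transpose_matrix_vector[simp del]

lemma scheme_B_net_gain:
  "transpose (scheme_B A p) *v x = (\<chi> j. (transpose A *v x) $ j - p \<bullet> x)"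
proof -
  have "(transpose (scheme_B A p) *v x) $ j = (transpose A *v x) $ j - p \<bullet> x" for j
  proof -
    have "(transpose (scheme_B A p) *v x) $ j = (\<Sum>i\<in>UNIV. A $ i $ j * x $ i - p $ i * x $ i)"
      by (simp add: matrix_vector_mult_def transpose_def scheme_B_def left_diff_distrib)
    also have "\<dots> = (transpose A *v x) $ j - p \<bullet> x"
      by (simp add: sum_subtractf matrix_vector_mult_def transpose_def inner_vec_def)
    finally show ?thesis .
  qed
  then show ?thesis by (simp add: vec_eq_iff)
qed

lemma subspace_scheme_D: "subspace (scheme_D A p)"
proof -
  have "scheme_D A p = (\<lambda>x. transpose (scheme_B A p) *v x) ` UNIV"
    unfolding scheme_D_def by blast
  then show ?thesis
    by (metis linear_subspace_image matrix_vector_mul_linear subspace_UNIV)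
qed

lemma dominated_iff_dominated_zero_diff: "dominated a b \<longleftrightarrow> dominated 0 (b - a)"
  unfolding dominated_def by simp

lemma dominated_zero_imp_vlt:
  assumes "dominated 0 d"
  shows "vlt 0 d"
proof -
  from assms obtain t where "0 < d $ t" unfolding dominated_def by auto
  then have "d \<noteq> 0" by auto
  with assms show ?thesis unfolding dominated_def vlt_def vle_def by simp
qed

lemma arbitrage_imp_dominated_net_gain:
  assumes "arbitrage_portfolio A p x"
  shows "dominated 0 (transpose (scheme_B A p) *v x)"
proof -
  let ?a = "transpose A *v x"
  have gain: "(transpose (scheme_B A p) *v x) $ j = ?a $ j - p \<bullet> x" for j
    by (simp add: scheme_B_net_gain)
  show ?thesis
    using assms unfolding arbitrage_portfolio_def
  proof
    assume h: "p \<bullet> x \<le> 0 \<and> vlt 0 ?a"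
    then have ge: "\<forall>j. 0 \<le> ?a $ j" and "?a \<noteq> 0"
      by (auto simp: vlt_def vle_def)
    then obtain j where "0 < ?a $ j" by (metis order_le_less vec_eq_iff zero_index)
    then have "0 < ?a $ j - p \<bullet> x" using h by linarith
    moreover have "\<forall>t. 0 \<le> ?a $ t - p \<bullet> x" using ge h by (auto intro: order_trans)
    ultimately show ?thesis unfolding dominated_def gain by auto
  next
    assume h: "p \<bullet> x < 0 \<and> vle 0 ?a"
    then have "\<forall>t. 0 < ?a $ t - p \<bullet> x" by (auto simp: vle_def intro: less_le_trans)
    then show ?thesis unfolding dominated_def gain by (auto intro: less_imp_le)
  qed
qed

lemma net_gain_eq_payoff_of_price_zero_portfolio:
  fixes A :: "real^'m^'n" and p :: "real^'n" and i1 :: 'n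
  assumes riskless: "\<forall>j. A $ i1 $ j = 1" "p $ i1 = 1"
  obtains y where "p \<bullet> y = 0" "transpose (scheme_B A p) *v x = transpose A *v y"
proof
  define y where "y = x - (p \<bullet> x) *\<^sub>R axis i1 1"
  show "p \<bullet> y = 0"
    using riskless by (simp add: y_def inner_diff_right inner_axis)
  have "(transpose A *v axis i1 (1::real)) $ j = 1" for j
    using riskless by (simp add: matrix_vector_mult_def transpose_def axis_def if_distrib cong: if_cong)
  then have "(transpose A *v y) $ j = (transpose A *v x) $ j - p \<bullet> x" for j
    by (simp add: y_def matrix_vector_mult_diff_distrib matrix_vector_mult_scaleR)
  then show "transpose (scheme_B A p) *v x = transpose A *v y"
    by (simp add: scheme_B_net_gain vec_eq_iff)
qed

lemma arbitrage_iff_dominating_element: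
  fixes A :: "real^'m^'n" and p :: "real^'n" and i1 :: 'n
  assumes "\<forall>j. A $ i1 $ j = 1" "p $ i1 = 1"
  shows "(\<exists>x. arbitrage_portfolio A p x) \<longleftrightarrow> (\<exists>d\<in>scheme_D A p. dominated 0 d)"
proof
  assume "\<exists>x. arbitrage_portfolio A p x"
  then show "\<exists>d\<in>scheme_D A p. dominated 0 d"
    unfolding scheme_D_def by (blast dest: arbitrage_imp_dominated_net_gain)
next
  assume "\<exists>d\<in>scheme_D A p. dominated 0 d"
  then obtain x where dom: "dominated 0 (transpose (scheme_B A p) *v x)"
    unfolding scheme_D_def by blast
  obtain y where "p \<bullet> y = 0" "transpose (scheme_B A p) *v x = transpose A *v y"
    using net_gain_eq_payoff_of_price_zero_portfolio[OF assms] .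
  with dom have "arbitrage_portfolio A p y"
    unfolding arbitrage_portfolio_def by (simp add: dominated_zero_imp_vlt)
  then show "\<exists>x. arbitrage_portfolio A p x" ..
qed

lemma obtain_two_distinct:
  assumes "infinite X \<or> card X \<ge> 2"
  obtains a b where "a \<in> X" "b \<in> X" "a \<noteq> b"
proof -
  have "X \<noteq> {} \<and> (\<forall>a. X \<noteq> {a})" using assms by auto
  then show ?thesis using that by blast
qed

lemma contains_uncertainty_if_no_domination:
  assumes "\<forall>d1\<in>D'. \<forall>d2\<in>D'. \<not> dominated d1 d2"
    and "a \<in> D'" "b \<in> D'" "a \<noteq> b"
  shows "contains_uncertainty D'"
proof -
  define R where "R = {(a, y) | y. y \<in> D' \<and> y \<noteq> a}"
  have "projection_of_preference D' {}" "projection_of_preference D' R"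
    using assms unfolding projection_of_preference_def preference_on_def R_def by auto
  moreover have "R \<noteq> {}" using assms unfolding R_def by auto
  ultimately show ?thesis unfolding contains_uncertainty_def by blast
qed

lemma dominated_pair_has_no_uncertainty:
  assumes "dominated a b"
  shows "\<not> contains_uncertainty {a, b}"
proof -
  have "R = {(a, b)}" if R: "projection_of_preference {a, b} R" for R
  proof -
    have ab: "(a, b) \<in> R" using R assms unfolding projection_of_preference_def by blast
    have asym: "(x, y) \<in> R \<Longrightarrow> (y, x) \<notin> R" if "x \<in> {a, b}" "y \<in> {a, b}" for x y
      using R that unfolding projection_of_preference_def preference_on_def by blast
    have "R \<subseteq> {a, b} \<times> {a, b}"
      using R unfolding projection_of_preference_def preference_on_def by blast
    with ab asym show ?thesis by fast
  qed
  then show ?thesis unfolding contains_uncertainty_def by blast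
qed

lemma subspace_uncertainty_iff_no_dominating_element:
  fixes D :: "(real^'m) set"
  assumes "subspace D"
  shows "(\<forall>D' \<subseteq> D. (infinite D' \<or> card D' \<ge> 2) \<longrightarrow> contains_uncertainty D')
         \<longleftrightarrow> \<not> (\<exists>d\<in>D. dominated 0 d)"
proof
  assume unc: "\<forall>D' \<subseteq> D. (infinite D' \<or> card D' \<ge> 2) \<longrightarrow> contains_uncertainty D'"
  show "\<not> (\<exists>d\<in>D. dominated 0 d)"
  proof
    assume "\<exists>d\<in>D. dominated 0 d"
    then obtain d where d: "d \<in> D" "dominated 0 d" by blast
    then have "d \<noteq> 0" unfolding dominated_def by auto
    then have "card {0, d} \<ge> 2" by simp
    moreover have "{0, d} \<subseteq> D" using d assms by (simp add: subspace_0)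
    ultimately have "contains_uncertainty {0, d}" using unc by blast
    with d show False using dominated_pair_has_no_uncertainty by blast
  qed
next
  assume none: "\<not> (\<exists>d\<in>D. dominated 0 d)"
  show "\<forall>D' \<subseteq> D. (infinite D' \<or> card D' \<ge> 2) \<longrightarrow> contains_uncertainty D'"
  proof (intro allI impI)
    fix D' assume sub: "D' \<subseteq> D" and two: "infinite D' \<or> card D' \<ge> 2"
    have "\<forall>d1\<in>D'. \<forall>d2\<in>D'. \<not> dominated d1 d2"
      using none sub assms subspace_diff dominated_iff_dominated_zero_diff by blast
    with two show "contains_uncertainty D'"
      by (metis obtain_two_distinct contains_uncertainty_if_no_domination)
  qed
qed

theorem theorem2:
  fixes A :: "real^'m^'n" and p :: "real^'n" and i1 :: 'n
  assumes "\<forall>j. A $ i1 $ j = 1"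
    and "p $ i1 = 1"
  shows "(\<not> (\<exists>x. arbitrage_portfolio A p x)) \<longleftrightarrow>
         (\<forall>D' \<subseteq> scheme_D A p. (infinite D' \<or> card D' \<ge> 2) \<longrightarrow> contains_uncertainty D')"
  using arbitrage_iff_dominating_element[OF assms]
    subspace_uncertainty_iff_no_dominating_element[OF subspace_scheme_D]
  by blast

end
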